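(* Let $M$ be a right cancellative monoid and $\tau : X^* \to M$ a monoid choice of generators. Let $\varphi : \hat{X}^* \to H$ be the monoid morphism into the inverse hull $H$ of $M$ defined by $x\varphi = \rho_{x\tau}$ and $\overline{x}\varphi = \rho_{x\tau}^{-1}$ for $x \in X$. Then $L_\tau(M) = \{w \in \hat{X}^* : w\varphi \text{ is the identity of } H\}$.
   Context: Maps are written on the right. $X^*$ is the free monoid on $X$; a choice of generators is a surjective monoid morphism. Let $\overline{X} = \{\overline{x} : x \in X\}$ be new symbols, $\hat{X} = X \cup \overline{X}$. The loop automaton of $M$ w.r.t. $\tau$ has vertex set $M$, for each $a \in M$, $x \in X$ an edge $a \to a(x\tau)$ labelled $x$ and an edge $a(x\tau) \to a$ labelled $\overline{x}$; the loop problem $L_\tau(M) \subseteq \hat{X}^*$ is the set of labels of paths from the identity to the identity. For $m \in M$, $\rho_m : M \to M$, $a \mapsto am$, is injective by right cancellativity, with partial inverse $\rho_m^{-1} : Mm \to M$, $am \mapsto a$. The inverse hull $H$ of $M$ is the monoid of partial bijections of $M$ (under composition) generated by all $\rho_m$ and $\rho_m^{-1}$; its identity is the identity map of $M$. *)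

theory Defs
  imports Main
begin

text \<open>Letters of the doubled alphabet: Pos x = x, Neg x = overline x.\<close>
datatype 'x letter = Pos 'x | Neg 'x

definition right_cancellative :: "'m::monoid_mult itself \<Rightarrow> bool" where
  "right_cancellative _ \<longleftrightarrow> (\<forall>a b c :: 'm. a * c = b * c \<longrightarrow> a = b)"

definition monoid_choice_of_generators :: "('x list \<Rightarrow> 'm::monoid_mult) \<Rightarrow> bool" where
  "monoid_choice_of_generators \<tau> \<longleftrightarrow>
     \<tau> [] = 1 \<and> (\<forall>u v. \<tau> (u @ v) = \<tau> u * \<tau> v) \<and> surj \<tau>"

fun loop_edge :: "('x list \<Rightarrow> 'm::monoid_mult) \<Rightarrow> 'm \<Rightarrow> 'x letter \<Rightarrow> 'm \<Rightarrow> bool" where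
  "loop_edge \<tau> a (Pos x) b \<longleftrightarrow> b = a * \<tau> [x]"
| "loop_edge \<tau> a (Neg x) b \<longleftrightarrow> a = b * \<tau> [x]"

inductive loop_path :: "('x list \<Rightarrow> 'm::monoid_mult) \<Rightarrow> 'm \<Rightarrow> 'x letter list \<Rightarrow> 'm \<Rightarrow> bool"
  for \<tau> where
  nil: "loop_path \<tau> a [] a"
| cons: "loop_edge \<tau> a l b \<Longrightarrow> loop_path \<tau> b w c \<Longrightarrow> loop_path \<tau> a (l # w) c"

definition loop_problem :: "('x list \<Rightarrow> 'm::monoid_mult) \<Rightarrow> 'x letter list set" where
  "loop_problem \<tau> = {w. loop_path \<tau> 1 w 1}"

text \<open>Partial maps of M, written on the right: composition f then g.\<close>
definition pcomp :: "('m \<Rightarrow> 'm option) \<Rightarrow> ('m \<Rightarrow> 'm option) \<Rightarrow> ('m \<Rightarrow> 'm option)" where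
  "pcomp f g = (\<lambda>a. case f a of None \<Rightarrow> None | Some b \<Rightarrow> g b)"

definition rho :: "'m::monoid_mult \<Rightarrow> ('m \<Rightarrow> 'm option)" where
  "rho m = (\<lambda>a. Some (a * m))"

definition rho_inv :: "'m::monoid_mult \<Rightarrow> ('m \<Rightarrow> 'm option)" where
  "rho_inv m = (\<lambda>b. if \<exists>a. b = a * m then Some (THE a. b = a * m) else None)"

definition hull_id :: "'m \<Rightarrow> 'm option" where
  "hull_id = (\<lambda>a. Some a)"

inductive_set inverse_hull :: "('m::monoid_mult \<Rightarrow> 'm option) set" where
  id: "hull_id \<in> inverse_hull"
| gen: "f \<in> inverse_hull \<Longrightarrow> pcomp f (rho m) \<in> inverse_hull"
| geninv: "f \<in> inverse_hull \<Longrightarrow> pcomp f (rho_inv m) \<in> inverse_hull"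

fun phi_letter :: "('x list \<Rightarrow> 'm::monoid_mult) \<Rightarrow> 'x letter \<Rightarrow> ('m \<Rightarrow> 'm option)" where
  "phi_letter \<tau> (Pos x) = rho (\<tau> [x])"
| "phi_letter \<tau> (Neg x) = rho_inv (\<tau> [x])"

fun phi :: "('x list \<Rightarrow> 'm::monoid_mult) \<Rightarrow> 'x letter list \<Rightarrow> ('m \<Rightarrow> 'm option)" where
  "phi \<tau> [] = hull_id"
| "phi \<tau> (l # w) = pcomp (phi_letter \<tau> l) (phi \<tau> w)"

end

theory Submission
  imports Defs
begin

text \<open>Under right cancellativity, \<open>w\<phi>\<close> maps \<open>a\<close> to \<open>b\<close> exactly when the loop automaton
has a path labelled \<open>w\<close> from \<open>a\<close> to \<open>b\<close>. Left multiplication by any \<open>c\<close> maps paths to paths,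
so a loop at the identity yields a loop at every vertex \<open>c\<close>, i.e. \<open>w\<phi>\<close> fixes every element
of \<open>M\<close>.\<close>

lemma rho_inv_eq_Some_iff:
  assumes "right_cancellative TYPE('m::monoid_mult)"
  shows "rho_inv (t::'m) a = Some b \<longleftrightarrow> a = b * t"
proof -
  have unique: "(THE c. a = c * t) = d" if "a = d * t" for d
  proof (rule the_equality)
    show "\<And>c. a = c * t \<Longrightarrow> c = d"
      using assms that unfolding right_cancellative_def by metis
  qed (fact that)
  show ?thesis
    unfolding rho_inv_def using unique by force
qed

lemma phi_letter_eq_Some_iff:
  assumes "right_cancellative TYPE('m::monoid_mult)"
  shows "phi_letter (\<tau>::'x list \<Rightarrow> 'm) l a = Some b \<longleftrightarrow> loop_edge \<tau> a l b"
  by (cases l) (auto simp: rho_def rho_inv_eq_Some_iff[OF assms])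

lemma loop_path_Cons_iff:
  "loop_path \<tau> a (l # w) c \<longleftrightarrow> (\<exists>b. loop_edge \<tau> a l b \<and> loop_path \<tau> b w c)"
  by (auto elim: loop_path.cases intro: loop_path.cons)

lemma phi_eq_Some_iff_loop_path:
  assumes "right_cancellative TYPE('m::monoid_mult)"
  shows "phi (\<tau>::'x list \<Rightarrow> 'm) w a = Some b \<longleftrightarrow> loop_path \<tau> a w b"
proof (induction w arbitrary: a)
  case Nil
  show ?case by (auto simp: hull_id_def elim: loop_path.cases intro: loop_path.nil)
next
  case (Cons l w)
  have "phi \<tau> (l # w) a = Some b \<longleftrightarrow> (\<exists>c. phi_letter \<tau> l a = Some c \<and> phi \<tau> w c = Some b)"
    by (auto simp: pcomp_def split: option.split)
  also have "\<dots> \<longleftrightarrow> (\<exists>c. loop_edge \<tau> a l c \<and> loop_path \<tau> c w b)"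
    by (simp add: phi_letter_eq_Some_iff[OF assms] Cons.IH)
  finally show ?case
    by (simp add: loop_path_Cons_iff)
qed

lemma loop_path_mult_left:
  "loop_path \<tau> a w b \<Longrightarrow> loop_path \<tau> (c * a) w (c * (b::'m::monoid_mult))"
proof (induction rule: loop_path.induct)
  case (nil a)
  show ?case by (rule loop_path.nil)
next
  case (cons a l b w d)
  have "loop_edge \<tau> (c * a) l (c * b)"
    using cons.hyps(1) by (cases l) (auto simp: mult.assoc)
  then show ?case using cons.IH by (rule loop_path.cons)
qed

lemma phi_eq_hull_id_iff_loop_path:
  assumes "right_cancellative TYPE('m::monoid_mult)"
  shows "phi (\<tau>::'x list \<Rightarrow> 'm) w = hull_id \<longleftrightarrow> loop_path \<tau> 1 w 1"
proof
  assume "phi \<tau> w = hull_id"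
  then show "loop_path \<tau> 1 w 1"
    by (simp add: hull_id_def phi_eq_Some_iff_loop_path[OF assms, symmetric])
next
  assume "loop_path \<tau> 1 w 1"
  then have "loop_path \<tau> c w c" for c
    using loop_path_mult_left[of \<tau> 1 w 1 c] by simp
  then show "phi \<tau> w = hull_id"
    by (auto simp: hull_id_def phi_eq_Some_iff_loop_path[OF assms])
qed

theorem corollary7p7:
  fixes \<tau> :: "'x list \<Rightarrow> 'm::monoid_mult"
  assumes "right_cancellative TYPE('m)"
    and "monoid_choice_of_generators \<tau>"
  shows "loop_problem \<tau> = {w. phi \<tau> w = hull_id}"
  by (auto simp: loop_problem_def phi_eq_hull_id_iff_loop_path[OF assms(1)])

end
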